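(* Let $T$ be a complete theory. If $\langle\varphi(x,y),\langle a_\eta\rangle_{\eta\in{}^{\omega>}2}\rangle$ is an antichain tree, then $\varphi(x,y)$ witnesses SOP$_1$.
   Context: Work in a monster model of $T$; ${}^{\omega>}2$ is the binary tree with initial-segment order $\trianglelefteq$. A subset $X\subseteq{}^{\omega>}2$ is an antichain if its elements are pairwise $\trianglelefteq$-incomparable. $\langle\varphi(x,y),\langle a_\eta\rangle_{\eta\in{}^{\omega>}2}\rangle$ is an antichain tree if for every $X\subseteq{}^{\omega>}2$, $\{\varphi(x,a_\eta):\eta\in X\}$ is consistent if and only if $X$ is an antichain. $\varphi$ witnesses SOP$_1$ if there is $\langle b_\eta\rangle_{\eta\in{}^{\omega>}2}$ such that for every $\eta\in{}^\omega2$, $\{\varphi(x,b_{\eta\lceil n}):n<\omega\}$ is consistent, and for all $\eta,\nu\in{}^{\omega>}2$, $\{\varphi(x,b_{\eta^\frown\langle1\rangle}),\varphi(x,b_{\eta^\frown\langle0\rangle^\frown\nu})\}$ is inconsistent. *)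

theory Defs
  imports "HOL-Library.Sublist"
begin

text \<open>We work in a monster model whose elements (or tuples
of elements) of the sort of the variable tuple x form the type 'x and those of the
parameter tuple y form the type 'p. A formula phi(x,y) is represented by its
satisfaction relation in the monster model, phi :: 'x => 'p => bool.
A set of formulas with parameters (each a predicate on 'x) is consistent iff it is
finitely satisfiable in the monster model (equivalently, by compactness, consistent
with the elementary diagram of the monster model).\<close>

definition consistent :: "('x \<Rightarrow> bool) set \<Rightarrow> bool" where
  "consistent S \<longleftrightarrow> (\<forall>F. F \<subseteq> S \<longrightarrow> finite F \<longrightarrow> (\<exists>x. \<forall>\<psi>\<in>F. \<psi> x))"

text \<open>The binary tree 2^{<omega} is bool list (False = 0, True = 1), ordered by
the initial-segment (prefix) order.\<close>

definition antichain :: "bool list set \<Rightarrow> bool" where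
  "antichain X \<longleftrightarrow> (\<forall>\<eta>\<in>X. \<forall>\<nu>\<in>X. \<eta> \<noteq> \<nu> \<longrightarrow> \<not> prefix \<eta> \<nu> \<and> \<not> prefix \<nu> \<eta>)"

definition antichain_tree :: "('x \<Rightarrow> 'p \<Rightarrow> bool) \<Rightarrow> (bool list \<Rightarrow> 'p) \<Rightarrow> bool" where
  "antichain_tree \<phi> a \<longleftrightarrow>
     (\<forall>X. consistent ((\<lambda>\<eta>. \<lambda>x. \<phi> x (a \<eta>)) ` X) \<longleftrightarrow> antichain X)"

definition restr :: "(nat \<Rightarrow> bool) \<Rightarrow> nat \<Rightarrow> bool list" where
  "restr \<eta> n = map \<eta> [0..<n]"

definition witnesses_SOP1 :: "('x \<Rightarrow> 'p \<Rightarrow> bool) \<Rightarrow> bool" where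
  "witnesses_SOP1 \<phi> \<longleftrightarrow> (\<exists>b :: bool list \<Rightarrow> 'p.
     (\<forall>\<eta> :: nat \<Rightarrow> bool. consistent ((\<lambda>n. \<lambda>x. \<phi> x (b (restr \<eta> n))) ` UNIV)) \<and>
     (\<forall>\<eta> \<nu>. \<not> consistent {\<lambda>x. \<phi> x (b (\<eta> @ [True])), \<lambda>x. \<phi> x (b (\<eta> @ [False] @ \<nu>))}))"

end

theory Submission
  imports Defs
begin

text \<open>Re-index the antichain tree along the map \<open>f(\<eta>) = h(\<eta>)\<^sup>\<frown>0\<close>, where \<open>h\<close> rewrites
each letter \<open>1\<close> as \<open>1\<close> and each \<open>0\<close> as \<open>10\<close>. Along a branch, \<open>f(\<eta>|n)\<close> continues
\<open>h(\<eta>|m)\<close> with a \<open>1\<close> for \<open>m < n\<close>, while \<open>f(\<eta>|m)\<close> continues it with a \<open>0\<close>; so the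
nodes of a branch form an antichain and the corresponding formulas are consistent.
On the other hand \<open>f(\<eta>\<^sup>\<frown>1) = h(\<eta>)\<^sup>\<frown>10\<close> is a proper initial segment of
\<open>f(\<eta>\<^sup>\<frown>0\<^sup>\<frown>\<nu>) = h(\<eta>)\<^sup>\<frown>10\<^sup>\<frown>h(\<nu>)\<^sup>\<frown>0\<close>, so these two formulas are inconsistent.\<close>

definition code_word :: "bool list \<Rightarrow> bool list" where
  "code_word \<eta> = concat (map (\<lambda>b. if b then [True] else [True, False]) \<eta>)"

definition code_node :: "bool list \<Rightarrow> bool list" where
  "code_node \<eta> = code_word \<eta> @ [False]"

lemma code_word_append [simp]: "code_word (xs @ ys) = code_word xs @ code_word ys"
  by (simp add: code_word_def)

lemma code_word_nonempty_starts_True: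
  assumes "ys \<noteq> []"
  obtains zs where "code_word ys = True # zs"
  using assms by (cases ys; cases "hd ys") (auto simp: code_word_def)

lemma restr_add: "restr \<eta> (m + k) = restr \<eta> m @ map \<eta> [m..<m + k]"
  by (simp add: restr_def upt_add_eq_append[of 0 m])

lemma code_node_restr_incomparable:
  assumes "m < n"
  shows "\<not> prefix (code_node (restr \<eta> m)) (code_node (restr \<eta> n))
       \<and> \<not> prefix (code_node (restr \<eta> n)) (code_node (restr \<eta> m))"
proof -
  obtain k where n: "n = m + k" and "k > 0"
    using assms less_imp_add_positive by blast
  then have "map \<eta> [m..<m + k] \<noteq> []"
    by simp
  then obtain zs where "code_word (map \<eta> [m..<m + k]) = True # zs"
    by (rule code_word_nonempty_starts_True)
  then have "code_node (restr \<eta> n) = code_word (restr \<eta> m) @ True # zs @ [False]"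
    by (simp add: n code_node_def restr_add)
  then show ?thesis
    by (simp add: code_node_def)
qed

lemma antichain_code_node_branch: "antichain (range (\<lambda>n. code_node (restr \<eta> n)))"
  unfolding antichain_def
proof clarify
  fix m n
  assume "code_node (restr \<eta> m) \<noteq> code_node (restr \<eta> n)"
  then have "m < n \<or> n < m"
    by (metis linorder_neqE_nat)
  then show "\<not> prefix (code_node (restr \<eta> m)) (code_node (restr \<eta> n))
           \<and> \<not> prefix (code_node (restr \<eta> n)) (code_node (restr \<eta> m))"
    using code_node_restr_incomparable by blast
qed

lemma code_node_True_strict_prefix:
  "strict_prefix (code_node (\<eta> @ [True])) (code_node (\<eta> @ [False] @ \<nu>))"
  by (simp add: code_node_def code_word_def strict_prefix_def)

lemma not_antichain_strict_prefix: "strict_prefix u v \<Longrightarrow> \<not> antichain {u, v}"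
  unfolding antichain_def by auto

lemma antichain_tree_consistent_iff:
  "antichain_tree \<phi> a \<Longrightarrow> consistent ((\<lambda>\<eta> x. \<phi> x (a \<eta>)) ` X) \<longleftrightarrow> antichain X"
  unfolding antichain_tree_def by blast

theorem proposition4p4:
  fixes \<phi> :: "'x \<Rightarrow> 'p \<Rightarrow> bool" and a :: "bool list \<Rightarrow> 'p"
  assumes "antichain_tree \<phi> a"
  shows "witnesses_SOP1 \<phi>"
proof -
  let ?b = "\<lambda>\<eta>. a (code_node \<eta>)"
  have "consistent ((\<lambda>n x. \<phi> x (?b (restr \<eta> n))) ` UNIV)" for \<eta>
    using antichain_tree_consistent_iff[OF assms, of "range (\<lambda>n. code_node (restr \<eta> n))"]
      antichain_code_node_branch
    by (simp add: image_image)
  moreover have "\<not> consistent {\<lambda>x. \<phi> x (?b (\<eta> @ [True])), \<lambda>x. \<phi> x (?b (\<eta> @ [False] @ \<nu>))}"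
    for \<eta> \<nu>
    using antichain_tree_consistent_iff[OF assms,
        of "{code_node (\<eta> @ [True]), code_node (\<eta> @ [False] @ \<nu>)}"]
      not_antichain_strict_prefix[OF code_node_True_strict_prefix]
    by simp
  ultimately show ?thesis
    unfolding witnesses_SOP1_def by (intro exI[of _ ?b]) blast
qed

end
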